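(* Let $r=r(n)\ge 2$ with $r=o(n^{1/2})$. Then $\Pr(\mathcal C\mid\mathcal A_2)=o(1)$ as $n\to\infty$, where $\mathcal C$ is the event that a third edge $e_3$ is chosen, $e_3\supseteq e_1\cap e_2$, and $e_3$ contains at least one vertex of $(e_1\setminus e_2)\cup(e_2\setminus e_1)$.
   Context: Random intersecting process: Let $[n]=\{1,\dots,n\}$ and $\binom{[n]}{r}$ the family of $r$-subsets of $[n]$. Choose $e_1$ uniformly at random from $\binom{[n]}{r}$. Given $\mathcal F_i=\{e_1,\dots,e_i\}$, let $\mathcal A(\mathcal F_i)=\{e\in\binom{[n]}{r}: e\notin\mathcal F_i,\ e\cap e_j\neq\emptyset \text{ for all } 1\le j\le i\}$, and choose $e_{i+1}$ uniformly at random from $\mathcal A(\mathcal F_i)$. The process halts when $\mathcal A(\mathcal F_i)=\emptyset$. $\mathcal A_2$ is the event that at least two edges are chosen and $|e_1\cap e_2|=1$. *)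

theory Defs
  imports "HOL-Probability.Probability" "HOL-Library.Landau_Symbols"
begin

definition edges :: "nat \<Rightarrow> nat \<Rightarrow> nat set set" where
  "edges n r = {e. e \<subseteq> {1..n} \<and> card e = r}"

definition adm :: "nat \<Rightarrow> nat \<Rightarrow> nat set set \<Rightarrow> nat set set" where
  "adm n r F = {e \<in> edges n r. e \<notin> F \<and> (\<forall>f\<in>F. e \<inter> f \<noteq> {})}"

text \<open>For the empty list, adm is the whole of edges n r.\<close>
definition proc_step :: "nat \<Rightarrow> nat \<Rightarrow> nat set list \<Rightarrow> nat set list pmf" where
  "proc_step n r xs =
     (if adm n r (set xs) = {} then return_pmf xs
      else map_pmf (\<lambda>e. xs @ [e]) (pmf_of_set (adm n r (set xs))))"

fun proc :: "nat \<Rightarrow> nat \<Rightarrow> nat \<Rightarrow> nat set list pmf" where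
  "proc n r 0 = return_pmf []"
| "proc n r (Suc k) = bind_pmf (proc n r k) (proc_step n r)"

definition evA2 :: "nat set list \<Rightarrow> bool" where
  "evA2 xs \<longleftrightarrow> length xs \<ge> 2 \<and> card (xs!0 \<inter> xs!1) = 1"

definition evC :: "nat set list \<Rightarrow> bool" where
  "evC xs \<longleftrightarrow> length xs \<ge> 3 \<and> xs!0 \<inter> xs!1 \<subseteq> xs!2 \<and>
     xs!2 \<inter> ((xs!0 - xs!1) \<union> (xs!1 - xs!0)) \<noteq> {}"

text \<open>Pr(C | A_2), computed on the first three steps of the process
  (both events depend only on e_1, e_2, e_3).\<close>
definition probC_given_A2 :: "nat \<Rightarrow> nat \<Rightarrow> real" where
  "probC_given_A2 n r =
     measure_pmf.prob (proc n r 3) {xs. evC xs \<and> evA2 xs} /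
     measure_pmf.prob (proc n r 3) {xs. evA2 xs}"

end

theory Submission
  imports Defs
begin

text \<open>Condition on the first two edges, with \<open>e\<^sub>1 \<inter> e\<^sub>2 = {v}\<close>. An edge realising
  \<open>\<C>\<close> passes through \<open>v\<close> and through one of the \<open>2(r - 1)\<close> vertices of the symmetric
  difference, so there are at most \<open>2(r - 1) \<cdot> C(n - 2, r - 2)\<close> of them; on the other hand every
  \<open>r\<close>-set through \<open>v\<close> other than \<open>e\<^sub>1, e\<^sub>2\<close> is admissible, and there are
  \<open>C(n - 1, r - 1) - 2\<close> of those. Hence the conditional probability is at most
  \<open>2(r - 1)\<^sup>2 / (n - 1) = O(r\<^sup>2/n)\<close>, which tends to \<open>0\<close> when \<open>r = o(\<surd>n)\<close>.\<close>

lemma card_supersets: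
  assumes "finite U" "K \<subseteq> U" "card K \<le> k"
  shows "card {e. e \<subseteq> U \<and> card e = k \<and> K \<subseteq> e} = (card U - card K) choose (k - card K)"
proof -
  have "finite K" using assms finite_subset by blast
  have "bij_betw (\<lambda>B. B \<union> K) {B. B \<subseteq> U - K \<and> card B = k - card K}
          {e. e \<subseteq> U \<and> card e = k \<and> K \<subseteq> e}"
  proof (rule bij_betw_byWitness[where f' = "\<lambda>e. e - K"])
    show "(\<lambda>e. e - K) ` {e. e \<subseteq> U \<and> card e = k \<and> K \<subseteq> e} \<subseteq> {B. B \<subseteq> U - K \<and> card B = k - card K}"
      using assms by (auto simp: card_Diff_subset finite_subset[of _ U])
    show "(\<lambda>B. B \<union> K) ` {B. B \<subseteq> U - K \<and> card B = k - card K} \<subseteq> {e. e \<subseteq> U \<and> card e = k \<and> K \<subseteq> e}"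
      using assms \<open>finite K\<close>
      by (auto, subst card_Un_disjoint) (auto intro: finite_subset[of _ U])
  qed auto
  then have "card {e. e \<subseteq> U \<and> card e = k \<and> K \<subseteq> e} = card (U - K) choose (k - card K)"
    using assms by (simp add: bij_betw_same_card[symmetric] n_subsets)
  then show ?thesis
    using \<open>finite K\<close> assms by (simp add: card_Diff_subset)
qed

lemma finite_edges: "finite (edges n r)"
  unfolding edges_def by (rule finite_subset[of _ "Pow {1..n}"]) auto

lemma finite_adm: "finite (adm n r F)"
  unfolding adm_def using finite_edges by auto

lemma card_edges_supersets:
  assumes "K \<subseteq> {1..n}" "card K \<le> r"
  shows "card {e \<in> edges n r. K \<subseteq> e} = (n - card K) choose (r - card K)"
proof -
  have "{e \<in> edges n r. K \<subseteq> e} = {e. e \<subseteq> {1..n} \<and> card e = r \<and> K \<subseteq> e}"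
    unfolding edges_def by blast
  then show ?thesis
    using card_supersets[of "{1..n}" K r] assms by simp
qed

lemma card_edges_through_meeting_le:
  assumes "v \<in> {1..n}" "D \<subseteq> {1..n}" "v \<notin> D" "r \<ge> 2"
  shows "card {e \<in> edges n r. v \<in> e \<and> e \<inter> D \<noteq> {}} \<le> card D * ((n - 2) choose (r - 2))"
proof -
  have "finite D" using assms(2) finite_subset by blast
  have pair: "card {e \<in> edges n r. {v, u} \<subseteq> e} = (n - 2) choose (r - 2)" if "u \<in> D" for u
  proof -
    have "u \<noteq> v" using that assms(3) by blast
    then have "card {v, u} = 2" by simp
    then show ?thesis using card_edges_supersets[of "{v, u}" n r] that assms by auto
  qed
  have "card {e \<in> edges n r. v \<in> e \<and> e \<inter> D \<noteq> {}}
      \<le> card (\<Union>u\<in>D. {e \<in> edges n r. {v, u} \<subseteq> e})"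
    using \<open>finite D\<close> finite_edges by (intro card_mono) auto
  also have "\<dots> \<le> (\<Sum>u\<in>D. card {e \<in> edges n r. {v, u} \<subseteq> e})"
    using \<open>finite D\<close> by (rule card_UN_le)
  also have "\<dots> = card D * ((n - 2) choose (r - 2))"
    using pair by simp
  finally show ?thesis .
qed

lemma removal_ratio_le:
  fixes a b k m s :: real
  assumes "a \<le> m - k" "s \<le> b + k" "0 \<le> k" "k \<le> m" "m \<le> s" "0 < b" "0 < s"
  shows "a / b \<le> m / s"
proof -
  have "a * s \<le> (m - k) * s" using assms by (intro mult_right_mono) auto
  also have "\<dots> \<le> m * (s - k)" using assms by (simp add: algebra_simps mult_left_mono)
  also have "\<dots> \<le> m * b" using assms by (intro mult_left_mono) auto
  finally show ?thesis using assms by (simp add: field_simps)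
qed

lemma binomial_Suc_Suc_ratio:
  assumes "k \<le> m"
  shows "real (m choose k) / real (Suc m choose Suc k) = real (Suc k) / real (Suc m)"
proof -
  have "real (Suc m) * real (m choose k) = real (Suc m choose Suc k) * real (Suc k)"
    using Suc_times_binomial_eq[of m k] by (metis of_nat_mult)
  moreover have "(Suc m choose Suc k) > 0" using assms by simp
  ultimately show ?thesis by (simp add: field_simps del: binomial_Suc_Suc)
qed

lemma edges_through_meeting_fraction_le:
  assumes "v \<in> {1..n}" "D \<subseteq> {1..n}" "v \<notin> D" "r \<ge> 2" "r \<le> n"
  shows "real (card {e \<in> edges n r. v \<in> e \<and> e \<inter> D \<noteq> {}}) / real (card {e \<in> edges n r. v \<in> e})
          \<le> real (card D) * (real r - 1) / real (n - 1)"
proof -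
  have card_star: "card {e \<in> edges n r. v \<in> e} = (n - 1) choose (r - 1)"
    using card_edges_supersets[of "{v}" n r] assms(1,4) by simp
  have "real (card {e \<in> edges n r. v \<in> e \<and> e \<inter> D \<noteq> {}}) / real (card {e \<in> edges n r. v \<in> e})
      \<le> real (card D * ((n - 2) choose (r - 2))) / real ((n - 1) choose (r - 1))"
    unfolding card_star using card_edges_through_meeting_le[OF assms(1-4)]
    by (intro divide_right_mono of_nat_mono) simp_all
  also have "\<dots> = real (card D) * (real ((n - 2) choose (r - 2)) / real ((n - 1) choose (r - 1)))"
    by simp
  also have "\<dots> = real (card D) * (real r - 1) / real (n - 1)"
    using binomial_Suc_Suc_ratio[of "r - 2" "n - 2"] assms(4,5)
    by (simp add: Suc_diff_Suc numeral_2_eq_2 of_nat_diff)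
  finally show ?thesis .
qed

lemma fraction_evC_adm_le:
  assumes e1: "e1 \<in> edges n r" and e2: "e2 \<in> edges n r" and "card (e1 \<inter> e2) = 1"
    and "r \<ge> 2" and "adm n r {e1, e2} \<noteq> {}"
  shows "real (card (adm n r {e1, e2} \<inter> {e. evC [e1, e2, e]})) / real (card (adm n r {e1, e2}))
          \<le> 2 * (real r - 1)^2 / real (n - 1)"
proof -
  obtain v where v: "e1 \<inter> e2 = {v}" using assms(3) by (metis card_1_singletonE)
  have sub: "e1 \<subseteq> {1..n}" "e2 \<subseteq> {1..n}" and card_e: "card e1 = r" "card e2 = r"
    using e1 e2 by (auto simp: edges_def)
  then have "finite e1" "finite e2" using finite_subset by blast+
  have "r \<le> n" using card_mono[OF _ sub(1)] card_e by simp
  define D where "D = (e1 - e2) \<union> (e2 - e1)"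
  have card_diff: "card (e1 - e2) = r - 1" "card (e2 - e1) = r - 1"
    using card_Diff_subset_Int[of e1 e2] card_Diff_subset_Int[of e2 e1]
      \<open>finite e1\<close> \<open>finite e2\<close> card_e assms(3)
    by (auto simp: Int_commute)
  then have "card (e1 - e2) \<noteq> 0" "card (e2 - e1) \<noteq> 0" using assms(4) by simp_all
  then have "e1 - e2 \<noteq> {}" "e2 - e1 \<noteq> {}" by (metis card.empty)+
  have "card D \<le> 2 * (r - 1)"
    unfolding D_def using card_Un_le[of "e1 - e2" "e2 - e1"] card_diff by simp
  define A where "A = adm n r {e1, e2}"
  define S where "S = {e \<in> edges n r. v \<in> e}"
  define M where "M = {e \<in> edges n r. v \<in> e \<and> e \<inter> D \<noteq> {}}"
  have "finite A" "finite S" "finite M"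
    using finite_adm finite_edges by (auto simp: A_def S_def M_def)
  have "e1 \<in> M" "e2 \<in> M" "e1 \<noteq> e2"
    using e1 e2 v \<open>e1 - e2 \<noteq> {}\<close> \<open>e2 - e1 \<noteq> {}\<close> by (auto simp: M_def D_def)
  have "M \<subseteq> S" by (auto simp: M_def S_def)
  have card_pair_removed: "card (X - {e1, e2}) = card X - 2" if "finite X" "e1 \<in> X" "e2 \<in> X" for X
    using that \<open>e1 \<noteq> e2\<close> by (simp add: card_Diff_subset)
  have "A \<inter> {e. evC [e1, e2, e]} \<subseteq> M - {e1, e2}"
    using v by (auto simp: A_def adm_def M_def evC_def D_def)
  then have "card (A \<inter> {e. evC [e1, e2, e]}) \<le> card M - 2"
    using card_mono card_pair_removed \<open>finite M\<close> \<open>e1 \<in> M\<close> \<open>e2 \<in> M\<close> by (metis finite_Diff)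
  have "S - {e1, e2} \<subseteq> A"
    using v by (auto simp: A_def adm_def S_def)
  then have "card S - 2 \<le> card A"
    using card_mono card_pair_removed \<open>finite A\<close> \<open>finite S\<close> \<open>M \<subseteq> S\<close> \<open>e1 \<in> M\<close> \<open>e2 \<in> M\<close>
    by (metis subsetD)
  have "card {e1, e2} \<le> card M"
    using \<open>finite M\<close> \<open>e1 \<in> M\<close> \<open>e2 \<in> M\<close> by (intro card_mono) auto
  then have "2 \<le> card M" using \<open>e1 \<noteq> e2\<close> by simp
  have "card M \<le> card S" using \<open>finite S\<close> \<open>M \<subseteq> S\<close> by (rule card_mono)
  have "card A > 0" using assms(5) \<open>finite A\<close> by (auto simp: A_def card_gt_0_iff)
  have "real (card (A \<inter> {e. evC [e1, e2, e]})) / real (card A) \<le> real (card M) / real (card S)"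
    by (rule removal_ratio_le[where k = 2])
      (use \<open>card (A \<inter> {e. evC [e1, e2, e]}) \<le> card M - 2\<close> \<open>card S - 2 \<le> card A\<close>
         \<open>2 \<le> card M\<close> \<open>card M \<le> card S\<close> \<open>card A > 0\<close> in auto)
  also have "\<dots> \<le> real (card D) * (real r - 1) / real (n - 1)"
    unfolding M_def S_def using sub v assms(4) \<open>r \<le> n\<close>
    by (intro edges_through_meeting_fraction_le) (auto simp: D_def)
  also have "\<dots> \<le> 2 * (real r - 1)^2 / real (n - 1)"
    using \<open>card D \<le> 2 * (r - 1)\<close> assms(4)
    by (intro divide_right_mono) (simp_all add: power2_eq_square of_nat_diff mult_right_mono)
  finally show ?thesis unfolding A_def .
qed

lemma set_pmf_proc_step:
  assumes "ys \<in> set_pmf (proc_step n r xs)"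
  shows "ys = xs \<or> (\<exists>e\<in>adm n r (set xs). ys = xs @ [e])"
  using assms finite_adm[of n r "set xs"] unfolding proc_step_def
  by (auto split: if_splits)

lemma set_pmf_proc:
  "xs \<in> set_pmf (proc n r k) \<Longrightarrow> length xs \<le> k \<and> set xs \<subseteq> edges n r"
proof (induction k arbitrary: xs)
  case 0
  then show ?case by simp
next
  case (Suc k)
  then obtain zs where zs: "zs \<in> set_pmf (proc n r k)" "xs \<in> set_pmf (proc_step n r zs)"
    by auto
  from set_pmf_proc_step[OF zs(2)] Suc.IH[OF zs(1)] show ?case by (auto simp: adm_def)
qed

lemma measure_bind_pmf_le_mult:
  assumes "c \<ge> 0"
    and "\<And>x. x \<in> set_pmf p \<Longrightarrow> measure_pmf.prob (f x) B \<le> c * measure_pmf.prob (f x) A"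
  shows "measure_pmf.prob (bind_pmf p f) B \<le> c * measure_pmf.prob (bind_pmf p f) A"
proof -
  have "ennreal (measure_pmf.prob (bind_pmf p f) B) = (\<integral>\<^sup>+x. ennreal (measure_pmf.prob (f x) B) \<partial>p)"
    by (simp add: measure_pmf.emeasure_eq_measure[symmetric])
  also have "\<dots> \<le> (\<integral>\<^sup>+x. ennreal c * ennreal (measure_pmf.prob (f x) A) \<partial>p)"
    using assms by (intro nn_integral_mono_AE AE_pmfI) (simp add: ennreal_mult[symmetric] ennreal_leI)
  also have "\<dots> = ennreal c * ennreal (measure_pmf.prob (bind_pmf p f) A)"
    by (simp add: nn_integral_cmult measure_pmf.emeasure_eq_measure[symmetric])
  finally show ?thesis
    using assms(1) by (simp add: ennreal_mult[symmetric] ennreal_le_iff)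
qed

lemma prob_step_evC_evA2_le:
  assumes "xs \<in> set_pmf (proc n r 2)" "r \<ge> 2"
  shows "measure_pmf.prob (proc_step n r xs) {ys. evC ys \<and> evA2 ys}
         \<le> 2 * (real r - 1)^2 / real (n - 1) * measure_pmf.prob (proc_step n r xs) {ys. evA2 ys}"
proof (cases "\<exists>e1 e2. xs = [e1, e2] \<and> card (e1 \<inter> e2) = 1 \<and> adm n r {e1, e2} \<noteq> {}")
  case True
  then obtain e1 e2 where xs: "xs = [e1, e2]" "card (e1 \<inter> e2) = 1" "adm n r {e1, e2} \<noteq> {}"
    by blast
  have edges: "e1 \<in> edges n r" "e2 \<in> edges n r"
    using set_pmf_proc[OF assms(1)] xs by auto
  have step: "proc_step n r xs = map_pmf (\<lambda>e. [e1, e2, e]) (pmf_of_set (adm n r {e1, e2}))"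
    using xs by (simp add: proc_step_def)
  have "measure_pmf.prob (proc_step n r xs) {ys. evA2 ys} = 1"
    unfolding step using xs by (simp add: evA2_def)
  moreover have "measure_pmf.prob (proc_step n r xs) {ys. evC ys \<and> evA2 ys}
      = real (card (adm n r {e1, e2} \<inter> {e. evC [e1, e2, e]})) / real (card (adm n r {e1, e2}))"
    unfolding step using xs finite_adm by (simp add: evA2_def vimage_def measure_pmf_of_set)
  ultimately show ?thesis
    using fraction_evC_adm_le[OF edges xs(2) assms(2) xs(3)] by simp
next
  case False
  \<comment> \<open>then either \<open>\<A>\<^sub>2\<close> already fails for \<open>xs\<close> or no third edge can be added\<close>
  have "length xs \<le> 2" using set_pmf_proc[OF assms(1)] by simp
  have "\<not> (evC ys \<and> evA2 ys)" if "ys \<in> set_pmf (proc_step n r xs)" for ys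
    using set_pmf_proc_step[OF that] False \<open>length xs \<le> 2\<close>
    by (cases xs rule: remdups_adj.cases) (auto simp: evC_def evA2_def nth_append)
  then have "measure_pmf.prob (proc_step n r xs) {ys. evC ys \<and> evA2 ys} = 0"
    by (simp add: measure_pmf_zero_iff disjoint_iff)
  then show ?thesis by simp
qed

lemma probC_given_A2_nonneg: "0 \<le> probC_given_A2 n r"
  unfolding probC_given_A2_def by simp

lemma probC_given_A2_le:
  assumes "r \<ge> 2"
  shows "probC_given_A2 n r \<le> 2 * (real r - 1)^2 / real (n - 1)"
proof -
  let ?c = "2 * (real r - 1)^2 / real (n - 1)"
  have "proc n r 3 = bind_pmf (proc n r 2) (proc_step n r)"
    by (simp add: eval_nat_numeral)
  then have "measure_pmf.prob (proc n r 3) {xs. evC xs \<and> evA2 xs}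
      \<le> ?c * measure_pmf.prob (proc n r 3) {xs. evA2 xs}"
    using measure_bind_pmf_le_mult[OF _ prob_step_evC_evA2_le[OF _ assms]] by simp
  then show ?thesis
    unfolding probC_given_A2_def
    by (cases "measure_pmf.prob (proc n r 3) {xs. evA2 xs} = 0") (simp_all add: divide_le_eq)
qed

lemma bound_le_square_ratio:
  assumes "n \<ge> 2" "r \<ge> 1"
  shows "2 * (real r - 1)^2 / real (n - 1) \<le> 4 * (real r / sqrt (real n))^2"
proof -
  have "(real r - 1)^2 \<le> (real r)^2" using assms(2) by (simp add: power_mono)
  moreover have "real n \<le> 2 * (real n - 1)" using assms(1) by simp
  ultimately have "(real r - 1)^2 * real n \<le> (real r)^2 * (2 * (real n - 1))"
    by (intro mult_mono) simp_all
  then show ?thesis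
    using assms(1) by (simp add: power_divide of_nat_diff field_simps)
qed

theorem lemma4:
  fixes r :: "nat \<Rightarrow> nat"
  assumes "\<forall>n. r n \<ge> 2"
    and "(\<lambda>n. real (r n)) \<in> o(\<lambda>n. sqrt (real n))"
  shows "(\<lambda>n. probC_given_A2 n (r n)) \<longlonglongrightarrow> 0"
proof (rule tendsto_sandwich)
  show "\<forall>\<^sub>F n in sequentially. 0 \<le> probC_given_A2 n (r n)"
    by (simp add: probC_given_A2_nonneg)
  show "\<forall>\<^sub>F n in sequentially. probC_given_A2 n (r n) \<le> 4 * (real (r n) / sqrt (real n))^2"
    using eventually_ge_at_top[of 2]
  proof eventually_elim
    case (elim n)
    then show ?case
      using probC_given_A2_le[of "r n" n] bound_le_square_ratio[of n "r n"] assms(1)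
      by (metis order_trans one_le_numeral)
  qed
  have "(\<lambda>n. real (r n) / sqrt (real n)) \<longlonglongrightarrow> 0"
    using smalloD_tendsto[OF assms(2)] .
  then show "(\<lambda>n. 4 * (real (r n) / sqrt (real n))^2) \<longlonglongrightarrow> 0"
    by (auto intro: tendsto_eq_intros)
qed auto

end
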